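(* Let $A$ be a two-dimensional evolution algebra over a field $\mathbb{K}$ with $A^2=A$. Then the Lie algebra $\mathrm{Der}(A)$ of derivations of $A$ is zero, except when $\mathrm{char}(\mathbb{K})=3$ and $A\cong A_{2,\alpha}$ for some $\alpha\in\mathbb{K}^\times$. If $\mathrm{char}(\mathbb{K})=3$, then $\mathrm{Der}(A_{2,\alpha})=\{d_a : a\in\mathbb{K}\}$, where, with respect to a natural basis $\{e_1,e_2\}$ with $e_1^2=e_2$, $e_2^2=\alpha e_1$, the map $d_a$ is given by $d_a(re_1+se_2)=are_1-ase_2$; and $\mathrm{Der}(A)=0$ whenever $A$ is not isomorphic to any $A_{2,\alpha}$.
   Context: An evolution algebra over $\mathbb{K}$ is a $\mathbb{K}$-algebra with a basis $\{e_i\}$ (natural basis) such that $e_ie_j=0$ for $i\neq j$. $A_{2,\alpha}$ ($\alpha\in\mathbb{K}^\times$) is the evolution algebra with natural basis $\{e_1,e_2\}$, $e_1^2=e_2$, $e_2^2=\alpha e_1$. A derivation is a linear map $d$ with $d(xy)=d(x)y+xd(y)$. *)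

theory Defs
  imports Complex_Main "HOL-Library.Product_Plus"
begin

text \<open>A two-dimensional vector space over a field 'k is modelled as 'k \<times> 'k
  (with componentwise addition from Product_Plus) and scalar multiplication sc.\<close>

definition sc :: "'k::field \<Rightarrow> 'k \<times> 'k \<Rightarrow> 'k \<times> 'k" where
  "sc c v = (c * fst v, c * snd v)"

definition bilinear_mult :: "('k::field \<times> 'k \<Rightarrow> 'k \<times> 'k \<Rightarrow> 'k \<times> 'k) \<Rightarrow> bool" where
  "bilinear_mult m \<longleftrightarrow>
     (\<forall>x y z. m (x + y) z = m x z + m y z) \<and>
     (\<forall>x y z. m x (y + z) = m x y + m x z) \<and>
     (\<forall>c x y. m (sc c x) y = sc c (m x y)) \<and>
     (\<forall>c x y. m x (sc c y) = sc c (m x y))"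

definition is_basis2 :: "'k::field \<times> 'k \<Rightarrow> 'k \<times> 'k \<Rightarrow> bool" where
  "is_basis2 e1 e2 \<longleftrightarrow> (\<forall>v. \<exists>!rs. v = sc (fst rs) e1 + sc (snd rs) e2)"

definition natural_basis :: "('k::field \<times> 'k \<Rightarrow> 'k \<times> 'k \<Rightarrow> 'k \<times> 'k) \<Rightarrow> 'k \<times> 'k \<Rightarrow> 'k \<times> 'k \<Rightarrow> bool" where
  "natural_basis m e1 e2 \<longleftrightarrow> is_basis2 e1 e2 \<and> m e1 e2 = 0 \<and> m e2 e1 = 0"

definition evolution_algebra :: "('k::field \<times> 'k \<Rightarrow> 'k \<times> 'k \<Rightarrow> 'k \<times> 'k) \<Rightarrow> bool" where
  "evolution_algebra m \<longleftrightarrow> bilinear_mult m \<and> (\<exists>e1 e2. natural_basis m e1 e2)"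

text \<open>A^2 = A: the linear span of all products is the whole space.\<close>
definition square_full :: "('k::field \<times> 'k \<Rightarrow> 'k \<times> 'k \<Rightarrow> 'k \<times> 'k) \<Rightarrow> bool" where
  "square_full m \<longleftrightarrow> module.span sc {m x y | x y. True} = UNIV"

definition derivation :: "('k::field \<times> 'k \<Rightarrow> 'k \<times> 'k \<Rightarrow> 'k \<times> 'k) \<Rightarrow> ('k \<times> 'k \<Rightarrow> 'k \<times> 'k) \<Rightarrow> bool" where
  "derivation m d \<longleftrightarrow> Vector_Spaces.linear sc sc d \<and>
     (\<forall>x y. d (m x y) = m (d x) y + m x (d y))"

definition Der :: "('k::field \<times> 'k \<Rightarrow> 'k \<times> 'k \<Rightarrow> 'k \<times> 'k) \<Rightarrow> ('k \<times> 'k \<Rightarrow> 'k \<times> 'k) set" where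
  "Der m = {d. derivation m d}"

definition alg_isomorphic :: "('k::field \<times> 'k \<Rightarrow> 'k \<times> 'k \<Rightarrow> 'k \<times> 'k) \<Rightarrow> ('k \<times> 'k \<Rightarrow> 'k \<times> 'k \<Rightarrow> 'k \<times> 'k) \<Rightarrow> bool" where
  "alg_isomorphic m1 m2 \<longleftrightarrow> (\<exists>f. bij f \<and> Vector_Spaces.linear sc sc f \<and>
     (\<forall>x y. f (m1 x y) = m2 (f x) (f y)))"

text \<open>A_{2,\<alpha>} on the standard basis e1 = (1,0), e2 = (0,1):
  e1^2 = e2, e2^2 = \<alpha> e1, e1 e2 = e2 e1 = 0.\<close>
definition A2 :: "'k::field \<Rightarrow> 'k \<times> 'k \<Rightarrow> 'k \<times> 'k \<Rightarrow> 'k \<times> 'k" where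
  "A2 \<alpha> x y = (\<alpha> * snd x * snd y, fst x * fst y)"

end

theory Submission
  imports Defs
begin

(* Fix a natural basis e1, e2 and write e_j^2 = a_1j e1 + a_2j e2. Then A^2 is spanned by e1^2 and
   e2^2, so A^2 = A says exactly that the structure matrix (a_ij) is nonsingular. A derivation d is
   determined by d e1 and d e2, and by bilinearity the Leibniz rule only has to be checked on the
   basis pairs, where it becomes a linear system in the coordinates of d e1 and d e2. Nonsingularity
   forces d to be diagonal, d e1 = x e1 and d e2 = y e2, with a11 x = a22 y = 0, a21 y = 2 a21 x and
   a12 x = 2 a12 y. This leaves x = y = 0 unless a11 = a22 = 0; in that case y = 2 x and x = 2 y,
   so 3 x = 0, and a nonzero derivation can only exist in characteristic 3, where y = - x.
   Finally, a11 = a22 = 0 means that A is A2 alpha in the basis e1, e1^2 = a21 e2,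
   with alpha = a21^2 a12. *)

lemma sc_zero_left [simp]: "sc 0 x = 0"
  by (simp add: sc_def zero_prod_def)

lemma sc_zero_right [simp]: "sc c 0 = 0"
  by (simp add: sc_def zero_prod_def)

lemma sc_one [simp]: "sc 1 x = x"
  by (simp add: sc_def)

lemma sc_sc [simp]: "sc a (sc b x) = sc (a * b) x"
  by (simp add: sc_def)

lemma sc_minus_left [simp]: "sc (- c) x = - sc c x"
  by (simp add: sc_def)

lemma sc_minus_right [simp]: "sc c (- x) = - sc c x"
  by (simp add: sc_def)

lemma sc_combination_add:
  "(sc r u + sc s w) + (sc r' u + sc s' w) = sc (r + r') u + sc (s + s') w"
  by (simp add: sc_def prod_eq_iff algebra_simps)

lemma sc_combination_diff:
  "(sc r u + sc s w) - (sc r' u + sc s' w) = sc (r - r') u + sc (s - s') w"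
  by (simp add: sc_def prod_eq_iff algebra_simps)

lemma sc_combination_scale: "sc c (sc r u + sc s w) = sc (c * r) u + sc (c * s) w"
  by (simp add: sc_def prod_eq_iff algebra_simps)

lemma vector_space_sc: "vector_space (sc :: 'k::field \<Rightarrow> 'k \<times> 'k \<Rightarrow> 'k \<times> 'k)"
  by unfold_locales (auto simp: sc_def prod_eq_iff algebra_simps)

lemma linear_sc_iff:
  "Vector_Spaces.linear sc sc f \<longleftrightarrow>
     (\<forall>x y. f (x + y) = f x + f y) \<and> (\<forall>c x. f (sc c x) = sc c (f x))"
  by (simp add: Vector_Spaces.linear_iff vector_space_sc)

lemma linearD:
  assumes "Vector_Spaces.linear sc sc f"
  shows "f (x + y) = f x + f y" "f (sc c x) = sc c (f x)"
  using assms unfolding linear_sc_iff by blast+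

lemma bilinear_multD:
  assumes "bilinear_mult m"
  shows "m (x + y) z = m x z + m y z" "m x (y + z) = m x y + m x z"
    and "m (sc c x) y = sc c (m x y)" "m x (sc c y) = sc c (m x y)"
  using assms unfolding bilinear_mult_def by blast+

lemma nonsingular_2x2_kernel:
  fixes a11 :: "'k::field"
  assumes "a11 * a22 - a12 * a21 \<noteq> 0" and "a11 * x + a12 * y = 0" and "a21 * x + a22 * y = 0"
  shows "x = 0 \<and> y = 0"
proof -
  have "(a11 * a22 - a12 * a21) * x = a22 * (a11 * x + a12 * y) - a12 * (a21 * x + a22 * y)"
    and "(a11 * a22 - a12 * a21) * y = a11 * (a21 * x + a22 * y) - a21 * (a11 * x + a12 * y)"
    by (simp_all add: algebra_simps)
  then show ?thesis using assms by simp
qed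

lemma char_3_iff: "(3::'k::field) = 0 \<longleftrightarrow> CHAR('k) = 3"
proof -
  have "(3::'k) = 0 \<longleftrightarrow> CHAR('k) dvd 3"
    using of_nat_eq_0_iff_char_dvd[of 3, where 'a='k] by simp
  also have "\<dots> \<longleftrightarrow> CHAR('k) = 3"
  proof
    assume dvd: "CHAR('k) dvd 3"
    then have "CHAR('k) \<in> {..3}" by (auto dest: dvd_imp_le)
    then show "CHAR('k) = 3"
      using dvd CHAR_not_1[where 'a='k] by (auto simp: atMost_nat_numeral le_Suc_eq)
  qed simp
  finally show ?thesis .
qed

lemma neg_eq_double_if_char_3:
  fixes x :: "'k::ring_1"
  assumes "(3::'k) = 0"
  shows "- x = 2 * x"
proof -
  have "(3::'k) = 2 + 1" by simp
  then have "2 * x + x = 3 * x" by (metis distrib_right mult_1)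
  then show ?thesis using assms by (metis add.commute mult_zero_left neg_eq_iff_add_eq_0)
qed

locale basis2 =
  fixes e1 e2 :: "'k::field \<times> 'k"
  assumes basis: "is_basis2 e1 e2"
begin

abbreviation vec :: "'k \<Rightarrow> 'k \<Rightarrow> 'k \<times> 'k" where
  "vec r s \<equiv> sc r e1 + sc s e2"

lemma vec_exhaust:
  obtains r s where "v = vec r s"
  using basis unfolding is_basis2_def by metis

lemma vec_eq_iff: "vec r s = vec r' s' \<longleftrightarrow> r = r' \<and> s = s'"
  using basis unfolding is_basis2_def by (metis fst_conv snd_conv)

lemma vec_eq_0_iff: "vec r s = 0 \<longleftrightarrow> r = 0 \<and> s = 0"
  using vec_eq_iff[of r s 0 0] by simp

lemma linear_vec:
  assumes "Vector_Spaces.linear sc sc f" and "f e1 = vec x1 y1" and "f e2 = vec x2 y2"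
  shows "f (vec r s) = vec (r * x1 + s * x2) (r * y1 + s * y2)"
  by (simp add: linearD[OF assms(1)] assms(2,3) sc_combination_scale sc_combination_add)

lemma linearI:
  assumes f: "\<And>r s. f (vec r s) = sc r u + sc s w"
  shows "Vector_Spaces.linear sc sc f"
  unfolding linear_sc_iff
proof (intro conjI allI)
  fix x y
  obtain r s r' s' where "x = vec r s" "y = vec r' s'" by (metis vec_exhaust)
  then show "f (x + y) = f x + f y" by (simp add: f sc_combination_add)
next
  fix c x
  obtain r s where "x = vec r s" by (rule vec_exhaust)
  then show "f (sc c x) = sc c (f x)" by (simp add: f sc_combination_scale)
qed

lemma linear_extension: "\<exists>f. Vector_Spaces.linear sc sc f \<and> (\<forall>r s. f (vec r s) = sc r u + sc s w)"
proof -
  define coord where "coord v = (THE rs. v = vec (fst rs) (snd rs))" for v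
  have coord_vec: "coord (vec r s) = (r, s)" for r s
    unfolding coord_def by (rule the_equality) (simp, metis vec_eq_iff prod.collapse)
  define f where "f v = sc (fst (coord v)) u + sc (snd (coord v)) w" for v
  have "f (vec r s) = sc r u + sc s w" for r s by (simp add: f_def coord_vec)
  then show ?thesis using linearI by blast
qed

end

locale evolution_basis = basis2 e1 e2 for e1 e2 :: "'k::field \<times> 'k" +
  fixes m :: "'k \<times> 'k \<Rightarrow> 'k \<times> 'k \<Rightarrow> 'k \<times> 'k" and a11 a21 a12 a22 :: 'k
  assumes bilinear: "bilinear_mult m"
    and orthogonal: "m e1 e2 = 0" "m e2 e1 = 0"
    and square_e1: "m e1 e1 = vec a11 a21"
    and square_e2: "m e2 e2 = vec a12 a22"
begin

lemma mult_vec_squares: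
  "m (vec r s) (vec r' s') = sc (r * r') (m e1 e1) + sc (s * s') (m e2 e2)"
  by (simp add: bilinear_multD[OF bilinear] orthogonal mult.commute)

lemma mult_vec:
  "m (vec r s) (vec r' s') = vec (r * r' * a11 + s * s' * a12) (r * r' * a21 + s * s' * a22)"
  by (simp add: mult_vec_squares square_e1 square_e2 sc_combination_scale sc_combination_add
      mult.assoc)

lemma squares_span:
  assumes "square_full m"
  obtains r s where "v = sc r (m e1 e1) + sc s (m e2 e2)"
proof -
  interpret vector_space "sc :: 'k \<Rightarrow> 'k \<times> 'k \<Rightarrow> 'k \<times> 'k" by (rule vector_space_sc)
  let ?S = "span {m e1 e1, m e2 e2}"
  have products: "m x y \<in> ?S" for x y
  proof -
    obtain r s r' s' where "x = vec r s" "y = vec r' s'" by (metis vec_exhaust)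
    then show ?thesis by (simp add: mult_vec_squares span_add span_scale span_base)
  qed
  have "span {m x y | x y. True} \<subseteq> ?S"
    by (rule span_minimal) (use products in blast, simp)
  then have "v \<in> ?S" using assms unfolding square_full_def by auto
  then obtain r where "v - sc r (m e1 e1) \<in> span {m e2 e2}" by (auto simp: span_insert)
  then obtain s where "v - sc r (m e1 e1) = sc s (m e2 e2)" by (auto simp: span_singleton)
  then show ?thesis by (intro that[of r s]) (simp add: algebra_simps)
qed

lemma det_nonzero_if_square_full:
  assumes "square_full m"
  shows "a11 * a22 - a12 * a21 \<noteq> 0"
proof -
  have squares: "sc r (m e1 e1) + sc s (m e2 e2) = vec (r * a11 + s * a12) (r * a21 + s * a22)" for r s
    by (simp add: square_e1 square_e2 sc_combination_scale sc_combination_add)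
  obtain r s where "vec 1 0 = sc r (m e1 e1) + sc s (m e2 e2)" using assms by (rule squares_span)
  then have e1: "r * a11 + s * a12 = 1" "r * a21 + s * a22 = 0" by (simp_all only: squares vec_eq_iff)
  obtain r' s' where "vec 0 1 = sc r' (m e1 e1) + sc s' (m e2 e2)" using assms by (rule squares_span)
  then have e2: "r' * a11 + s' * a12 = 0" "r' * a21 + s' * a22 = 1" by (simp_all only: squares vec_eq_iff)
  have "(a11 * a22 - a12 * a21) * (r * s' - r' * s) = 1" using e1 e2 by algebra
  then show ?thesis by auto
qed

lemma derivation_iff_coords:
  assumes d_e1: "d e1 = vec x1 y1" and d_e2: "d e2 = vec x2 y2"
  shows "derivation m d \<longleftrightarrow> Vector_Spaces.linear sc sc d \<and>
    a11 * x2 + a12 * y1 = 0 \<and> a21 * x2 + a22 * y1 = 0 \<and>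
    a21 * x2 = a11 * x1 \<and> a11 * y1 + a21 * y2 = 2 * a21 * x1 \<and>
    a12 * x1 + a22 * x2 = 2 * a12 * y2 \<and> a12 * y1 = a22 * y2"
    (is "_ \<longleftrightarrow> _ \<and> ?equations")
proof (cases "Vector_Spaces.linear sc sc d")
  case False
  then show ?thesis by (simp add: derivation_def)
next
  case linear: True
  have d_vec: "d (vec r s) = vec (r * x1 + s * x2) (r * y1 + s * y2)" for r s
    using linear d_e1 d_e2 by (rule linear_vec)
  define defect where "defect x y = d (m x y) - (m (d x) y + m x (d y))" for x y
  have defect_vec: "defect (vec r s) (vec r' s') = vec
      (r * r' * (a21 * x2 - a11 * x1) + s * s' * (a12 * x1 + a22 * x2 - 2 * a12 * y2)
        - (r * s' + s * r') * (a11 * x2 + a12 * y1))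
      (r * r' * (a11 * y1 + a21 * y2 - 2 * a21 * x1) + s * s' * (a12 * y1 - a22 * y2)
        - (r * s' + s * r') * (a21 * x2 + a22 * y1))"
    for r s r' s'
    unfolding defect_def mult_vec d_vec sc_combination_add sc_combination_diff vec_eq_iff
    by (simp add: algebra_simps)
  have "derivation m d \<longleftrightarrow> (\<forall>x y. defect x y = 0)"
    using linear by (simp add: derivation_def defect_def)
  also have "\<dots> \<longleftrightarrow> (\<forall>r s r' s'. defect (vec r s) (vec r' s') = 0)"
    by (metis vec_exhaust)
  also have "\<dots> \<longleftrightarrow> ?equations"
  proof
    assume "\<forall>r s r' s'. defect (vec r s) (vec r' s') = 0"
    then have "defect (vec 1 0) (vec 0 1) = 0" "defect (vec 1 0) (vec 1 0) = 0"
      "defect (vec 0 1) (vec 0 1) = 0" by blast+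
    then show ?equations by (simp only: defect_vec vec_eq_0_iff) algebra
  next
    assume ?equations
    then show "\<forall>r s r' s'. defect (vec r s) (vec r' s') = 0"
      unfolding defect_vec vec_eq_0_iff by algebra
  qed
  finally show ?thesis using linear by simp
qed

lemma derivation_iff_zero:
  assumes det: "a11 * a22 - a12 * a21 \<noteq> 0" and not_A2: "(3::'k) \<noteq> 0 \<or> a11 \<noteq> 0 \<or> a22 \<noteq> 0"
  shows "derivation m d \<longleftrightarrow> d = (\<lambda>_. 0)"
proof
  assume "d = (\<lambda>_. 0)"
  moreover have "Vector_Spaces.linear sc sc (\<lambda>_. 0 :: 'k \<times> 'k)" by (rule linearI[of _ 0 0]) simp
  ultimately show "derivation m d" using derivation_iff_coords[of d 0 0 0 0] by simp
next
  assume der: "derivation m d"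
  obtain x1 y1 x2 y2 where d_e1: "d e1 = vec x1 y1" and d_e2: "d e2 = vec x2 y2"
    by (metis vec_exhaust)
  from der have linear: "Vector_Spaces.linear sc sc d" by (simp add: derivation_def)
  note equations = der[unfolded derivation_iff_coords[OF d_e1 d_e2], THEN conjunct2]
  have off_diagonal: "x2 = 0" "y1 = 0"
    using nonsingular_2x2_kernel[OF det] equations by blast+
  then have diagonal: "a11 * x1 = 0" "a22 * y2 = 0" "a21 = 0 \<or> y2 = 2 * x1" "a12 = 0 \<or> x1 = 2 * y2"
    using equations by auto
  have "x1 = 0 \<and> y2 = 0"
  proof (cases "a11 = 0")
    case False
    then have "x1 = 0" using diagonal by simp
    moreover have "a21 \<noteq> 0 \<or> a22 \<noteq> 0" using det by auto
    ultimately show ?thesis using diagonal by auto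
  next
    case True
    then have "a12 \<noteq> 0" "a21 \<noteq> 0" using det by auto
    then have "y2 = 2 * x1" "x1 = 2 * y2" using diagonal by simp_all
    then have "3 * x1 = 0" "3 * y2 = 0" by algebra+
    moreover have "(3::'k) \<noteq> 0 \<or> y2 = 0" using not_A2 True diagonal by auto
    ultimately show ?thesis using \<open>x1 = 2 * y2\<close> by auto
  qed
  then have d_vec: "d (vec r s) = 0" for r s
    using linear_vec[OF linear d_e1 d_e2] off_diagonal by simp
  show "d = (\<lambda>_. 0)"
  proof
    fix v
    obtain r s where "v = vec r s" by (rule vec_exhaust)
    then show "d v = 0" by (simp add: d_vec)
  qed
qed

lemma isomorphic_A2:
  assumes "a11 = 0" "a22 = 0" "a21 \<noteq> 0"
  shows "alg_isomorphic m (A2 (a21\<^sup>2 * a12))"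
proof -
  \<comment> \<open>f takes coordinates with respect to the basis e1, a21 e2 = e1^2.\<close>
  obtain f where linear: "Vector_Spaces.linear sc sc f"
    and "\<And>r s. f (vec r s) = sc r (1, 0) + sc s (0, 1 / a21)"
    using linear_extension by blast
  then have f_vec: "f (vec r s) = (r, s / a21)" for r s by (simp add: sc_def)
  have "bij f"
  proof (rule bijI)
    show "inj f"
    proof (rule injI)
      fix x y
      obtain r s r' s' where "x = vec r s" "y = vec r' s'" by (metis vec_exhaust)
      moreover assume "f x = f y"
      ultimately show "x = y" using assms by (simp add: f_vec)
    qed
    show "surj f"
    proof (rule surjI)
      fix p :: "'k \<times> 'k"
      show "f (vec (fst p) (a21 * snd p)) = p" using assms by (simp add: f_vec)
    qed
  qed
  moreover have "f (m x y) = A2 (a21\<^sup>2 * a12) (f x) (f y)" for x y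
  proof -
    obtain r s r' s' where "x = vec r s" "y = vec r' s'" by (metis vec_exhaust)
    then show ?thesis using assms by (simp add: mult_vec f_vec A2_def power2_eq_square field_simps)
  qed
  ultimately show ?thesis unfolding alg_isomorphic_def using linear by blast
qed

lemma derivation_iff_zero_if_not_A2:
  assumes "square_full m" and not_A2: "\<not> (CHAR('k) = 3 \<and> (\<exists>\<alpha>. \<alpha> \<noteq> 0 \<and> alg_isomorphic m (A2 \<alpha>)))"
  shows "derivation m d \<longleftrightarrow> d = (\<lambda>_. 0)"
proof -
  have det: "a11 * a22 - a12 * a21 \<noteq> 0" using assms(1) by (rule det_nonzero_if_square_full)
  have "(3::'k) \<noteq> 0 \<or> a11 \<noteq> 0 \<or> a22 \<noteq> 0"
  proof (rule ccontr)
    assume "\<not> ?thesis"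
    then have "CHAR('k) = 3" "a11 = 0" "a22 = 0" by (simp_all add: char_3_iff)
    moreover from this det have "a21 \<noteq> 0" "a21\<^sup>2 * a12 \<noteq> 0" by auto
    ultimately show False using not_A2 isomorphic_A2 by blast
  qed
  with det show ?thesis by (rule derivation_iff_zero)
qed

lemma derivation_A2_iff:
  assumes A2_shape: "a11 = 0" "a22 = 0" "a12 \<noteq> 0" "a21 \<noteq> 0" and char_3: "(3::'k) = 0"
  shows "derivation m d \<longleftrightarrow> (\<exists>a. \<forall>r s. d (vec r s) = sc (a * r) e1 - sc (a * s) e2)"
proof
  assume der: "derivation m d"
  obtain x1 y1 x2 y2 where d_e1: "d e1 = vec x1 y1" and d_e2: "d e2 = vec x2 y2"
    by (metis vec_exhaust)
  from der have linear: "Vector_Spaces.linear sc sc d" by (simp add: derivation_def)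
  note equations = der[unfolded derivation_iff_coords[OF d_e1 d_e2], THEN conjunct2]
  then have "a11 * x2 + a12 * y1 = 0" "a21 * x2 + a22 * y1 = 0" "a11 * y1 + a21 * y2 = 2 * a21 * x1"
    by blast+
  then have "x2 = 0" "y1 = 0" "y2 = - x1"
    using A2_shape by (simp_all add: neg_eq_double_if_char_3[OF char_3])
  then have "d (vec r s) = sc (x1 * r) e1 - sc (x1 * s) e2" for r s
    using linear_vec[OF linear d_e1 d_e2] by (simp add: mult.commute)
  then show "\<exists>a. \<forall>r s. d (vec r s) = sc (a * r) e1 - sc (a * s) e2" by blast
next
  assume "\<exists>a. \<forall>r s. d (vec r s) = sc (a * r) e1 - sc (a * s) e2"
  then obtain a where d_vec: "\<And>r s. d (vec r s) = sc (a * r) e1 - sc (a * s) e2" by blast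
  then have "d (vec r s) = sc r (sc a e1) + sc s (sc (- a) e2)" for r s by (simp add: mult.commute)
  then have linear: "Vector_Spaces.linear sc sc d" by (rule linearI)
  have d_e1: "d e1 = vec a 0" and d_e2: "d e2 = vec 0 (- a)"
    using d_vec[of 1 0] d_vec[of 0 1] by simp_all
  show "derivation m d" unfolding derivation_iff_coords[OF d_e1 d_e2]
    using linear A2_shape neg_eq_double_if_char_3[OF char_3] by (simp add: algebra_simps)
qed

end

lemma evolution_algebra_structure_constants:
  assumes "evolution_algebra m"
  obtains e1 e2 a11 a21 a12 a22 where "evolution_basis e1 e2 m a11 a21 a12 a22"
proof -
  obtain e1 e2 where natural: "natural_basis m e1 e2"
    using assms unfolding evolution_algebra_def by blast
  then interpret basis2 e1 e2 by unfold_locales (simp add: natural_basis_def)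
  obtain a11 a21 a12 a22 where "m e1 e1 = vec a11 a21" "m e2 e2 = vec a12 a22"
    by (metis vec_exhaust)
  with assms natural have "evolution_basis e1 e2 m a11 a21 a12 a22"
    by unfold_locales (simp_all add: evolution_algebra_def natural_basis_def)
  then show ?thesis by (rule that)
qed

theorem proposition5p3:
  fixes m :: "'k::field \<times> 'k \<Rightarrow> 'k \<times> 'k \<Rightarrow> 'k \<times> 'k"
  assumes "evolution_algebra m"
    and "square_full m"
  shows "(\<not> (CHAR('k) = 3 \<and> (\<exists>\<alpha>. \<alpha> \<noteq> 0 \<and> alg_isomorphic m (A2 \<alpha>)))
            \<longrightarrow> Der m = {\<lambda>_. 0})
       \<and> (CHAR('k) = 3 \<longrightarrow>
            (\<forall>e1 e2 \<alpha>. \<alpha> \<noteq> 0 \<and> natural_basis m e1 e2 \<and> m e1 e1 = e2 \<and> m e2 e2 = sc \<alpha> e1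
               \<longrightarrow> Der m = {d. \<exists>a. \<forall>r s. d (sc r e1 + sc s e2) = sc (a * r) e1 - sc (a * s) e2}))"
proof (intro conjI impI allI)
  assume not_A2: "\<not> (CHAR('k) = 3 \<and> (\<exists>\<alpha>. \<alpha> \<noteq> 0 \<and> alg_isomorphic m (A2 \<alpha>)))"
  obtain e1 e2 a11 a21 a12 a22 where "evolution_basis e1 e2 m a11 a21 a12 a22"
    using assms(1) by (rule evolution_algebra_structure_constants)
  then interpret evolution_basis e1 e2 m a11 a21 a12 a22 .
  show "Der m = {\<lambda>_. 0}"
    using assms(2) not_A2 by (simp add: Der_def derivation_iff_zero_if_not_A2)
next
  fix e1 e2 \<alpha>
  assume "CHAR('k) = 3" and A2_basis: "\<alpha> \<noteq> 0 \<and> natural_basis m e1 e2 \<and> m e1 e1 = e2 \<and> m e2 e2 = sc \<alpha> e1"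
  then have char_3: "(3::'k) = 0" and "\<alpha> \<noteq> 0" by (simp_all add: char_3_iff)
  have "evolution_basis e1 e2 m 0 1 \<alpha> 0"
    using assms(1) A2_basis
    by unfold_locales (simp_all add: evolution_algebra_def natural_basis_def)
  then interpret evolution_basis e1 e2 m 0 1 \<alpha> 0 .
  show "Der m = {d. \<exists>a. \<forall>r s. d (sc r e1 + sc s e2) = sc (a * r) e1 - sc (a * s) e2}"
    using derivation_A2_iff[OF refl refl \<open>\<alpha> \<noteq> 0\<close> one_neq_zero char_3] by (simp add: Der_def)
qed

end
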